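(* Let $\Gamma=(U\cup V,E)$ be a $3$-regular bipartite graph with bipartition $U,V$, let $m=|U|=|V|$ and $n=10m$, and let $\hat\Gamma$, $X$, $Y$, $\eta$, $\eta'$, $M$ be as described in the context. Then $$\det(M)=|\{\mu\in \mathrm{UMatch}(\hat\Gamma): \mathrm{sgn}(\mu)=1\}|-|\{\mu\in \mathrm{UMatch}(\hat\Gamma): \mathrm{sgn}(\mu)=-1\}|,$$ where $\mathrm{UMatch}(\hat\Gamma)$ is the set of uniform perfect matchings of $\hat\Gamma$.
   Context: Construction of $\hat\Gamma$: for each vertex $v$ of $\Gamma$ with neighbours $x,y,z$, there are four inner vertices $a_{v,S}$, one for each subset $S\subseteq\{x,y,z\}$ of even size (write $I_v$ for this set), and six outer vertices $b_{v,u,0},b_{v,u,1}$ for $u\in\{x,y,z\}$ (write $O_v$ for this set). Within the gadget, $a_{v,S}$ is adjacent to $b_{v,u,1}$ if $u\in S$ and to $b_{v,u,0}$ if $u\notin S$. For each edge $e=\{u,v\}\in E$ and $i\in\{0,1\}$ there is an edge $e_i$ of $\hat\Gamma$ joining $b_{v,u,i}$ and $b_{u,v,i}$. There are no other edges. Let $X=\bigcup_{v\in U}I_v\cup\bigcup_{v\in V}O_v$ and $Y=\bigcup_{v\in V}I_v\cup\bigcup_{v\in U}O_v$; every edge of $\hat\Gamma$ joins $X$ and $Y$, and $|X|=|Y|=n$. Fix bijections $\eta:X\to[n]$ and $\eta':Y\to[n]$, and let $M$ be the $n\times n$ $\{0,1\}$-matrix with $M(\eta(x),\eta'(y))=1$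 iff $x$ and $y$ are adjacent in $\hat\Gamma$. A perfect matching of $\hat\Gamma$ is identified with a bijection $\mu:X\to Y$ such that $\mu(x)$ is adjacent to $x$ for all $x\in X$; its sign $\mathrm{sgn}(\mu)$ is the sign of the permutation $\eta'\circ\mu\circ\eta^{-1}$ of $[n]$. A perfect matching $\mu$ is uniform if for every $e\in E$ at most one of $e_0,e_1$ belongs to $\mu$. *)

theory Defs
  imports "Jordan_Normal_Form.Determinant" "HOL-Library.FuncSet"
begin

text \<open>Vertices of the gadget graph: inner vertices a_{v,S} and outer vertices
  b_{v,u,i}; the index i in {0,1} is encoded as a bool (False = 0, True = 1).\<close>
datatype 'v hvert = InnerV 'v "'v set" | OuterV 'v 'v bool

definition nbrs :: "('v \<Rightarrow> 'v \<Rightarrow> bool) \<Rightarrow> 'v \<Rightarrow> 'v set" where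
  "nbrs E v = {u. E v u}"

definition cubic_bipartite :: "'v set \<Rightarrow> 'v set \<Rightarrow> ('v \<Rightarrow> 'v \<Rightarrow> bool) \<Rightarrow> bool" where
  "cubic_bipartite U V E \<longleftrightarrow> finite U \<and> finite V \<and> U \<inter> V = {} \<and>
     (\<forall>u v. E u v \<longrightarrow> E v u) \<and>
     (\<forall>u v. E u v \<longrightarrow> (u \<in> U \<and> v \<in> V) \<or> (u \<in> V \<and> v \<in> U)) \<and>
     (\<forall>v \<in> U \<union> V. card (nbrs E v) = 3)"

definition inner_set :: "('v \<Rightarrow> 'v \<Rightarrow> bool) \<Rightarrow> 'v \<Rightarrow> 'v hvert set" where
  "inner_set E v = {InnerV v S | S. S \<subseteq> nbrs E v \<and> even (card S)}"

definition outer_set :: "('v \<Rightarrow> 'v \<Rightarrow> bool) \<Rightarrow> 'v \<Rightarrow> 'v hvert set" where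
  "outer_set E v = {OuterV v u i | u i. u \<in> nbrs E v}"

definition Xset :: "'v set \<Rightarrow> 'v set \<Rightarrow> ('v \<Rightarrow> 'v \<Rightarrow> bool) \<Rightarrow> 'v hvert set" where
  "Xset U V E = (\<Union>v\<in>U. inner_set E v) \<union> (\<Union>v\<in>V. outer_set E v)"

definition Yset :: "'v set \<Rightarrow> 'v set \<Rightarrow> ('v \<Rightarrow> 'v \<Rightarrow> bool) \<Rightarrow> 'v hvert set" where
  "Yset U V E = (\<Union>v\<in>V. inner_set E v) \<union> (\<Union>v\<in>U. outer_set E v)"

definition gadj0 :: "('v \<Rightarrow> 'v \<Rightarrow> bool) \<Rightarrow> 'v hvert \<Rightarrow> 'v hvert \<Rightarrow> bool" where
  "gadj0 E x y \<longleftrightarrow>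
     (\<exists>v S u i. x = InnerV v S \<and> y = OuterV v u i \<and>
        S \<subseteq> nbrs E v \<and> even (card S) \<and> u \<in> nbrs E v \<and> (i \<longleftrightarrow> u \<in> S)) \<or>
     (\<exists>v u i. x = OuterV v u i \<and> y = OuterV u v i \<and> E u v)"

definition hadj :: "('v \<Rightarrow> 'v \<Rightarrow> bool) \<Rightarrow> 'v hvert \<Rightarrow> 'v hvert \<Rightarrow> bool" where
  "hadj E x y \<longleftrightarrow> gadj0 E x y \<or> gadj0 E y x"

text \<open>Biadjacency matrix M (indices 0..<n instead of 1..n).\<close>
definition biadj_matrix :: "'v set \<Rightarrow> 'v set \<Rightarrow> ('v \<Rightarrow> 'v \<Rightarrow> bool) \<Rightarrow> nat \<Rightarrow>
    ('v hvert \<Rightarrow> nat) \<Rightarrow> ('v hvert \<Rightarrow> nat) \<Rightarrow> int mat" where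
  "biadj_matrix U V E n \<eta> \<eta>' = mat n n (\<lambda>(i, j).
     if hadj E (the_inv_into (Xset U V E) \<eta> i) (the_inv_into (Yset U V E) \<eta>' j) then 1 else 0)"

text \<open>Perfect matchings as bijections X \<rightarrow> Y (extensional outside X).\<close>
definition perfect_matchings :: "'v set \<Rightarrow> 'v set \<Rightarrow> ('v \<Rightarrow> 'v \<Rightarrow> bool) \<Rightarrow>
    ('v hvert \<Rightarrow> 'v hvert) set" where
  "perfect_matchings U V E = {\<mu> \<in> Xset U V E \<rightarrow>\<^sub>E Yset U V E.
     bij_betw \<mu> (Xset U V E) (Yset U V E) \<and> (\<forall>x \<in> Xset U V E. hadj E x (\<mu> x))}"

definition in_matching :: "'v hvert set \<Rightarrow> ('v hvert \<Rightarrow> 'v hvert) \<Rightarrow> 'v hvert \<Rightarrow> 'v hvert \<Rightarrow> bool" where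
  "in_matching X \<mu> a b \<longleftrightarrow> (a \<in> X \<and> \<mu> a = b) \<or> (b \<in> X \<and> \<mu> b = a)"

definition uniform_matchings :: "'v set \<Rightarrow> 'v set \<Rightarrow> ('v \<Rightarrow> 'v \<Rightarrow> bool) \<Rightarrow>
    ('v hvert \<Rightarrow> 'v hvert) set" where
  "uniform_matchings U V E = {\<mu> \<in> perfect_matchings U V E.
     \<forall>u v. E u v \<longrightarrow>
       \<not> (in_matching (Xset U V E) \<mu> (OuterV v u False) (OuterV u v False) \<and>
          in_matching (Xset U V E) \<mu> (OuterV v u True) (OuterV u v True))}"

definition matching_sign :: "'v set \<Rightarrow> 'v set \<Rightarrow> ('v \<Rightarrow> 'v \<Rightarrow> bool) \<Rightarrow> nat \<Rightarrow>
    ('v hvert \<Rightarrow> nat) \<Rightarrow> ('v hvert \<Rightarrow> nat) \<Rightarrow> ('v hvert \<Rightarrow> 'v hvert) \<Rightarrow> int" where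
  "matching_sign U V E n \<eta> \<eta>' \<mu> =
     sign (\<lambda>i. if i < n then \<eta>' (\<mu> (the_inv_into (Xset U V E) \<eta> i)) else i)"

end

theory Submission
  imports Defs "HOL-Library.Disjoint_Sets"
begin

text \<open>By the Leibniz formula, the permutations contributing to det M are exactly the
  perfect matchings \<mu> of the gadget graph, each contributing sgn \<mu>.
  Suppose \<mu> uses both copies e_0, e_1 of an edge uv with u \<in> U, and let x, y be the other
  neighbours of u. Then the four inner vertices of the gadget of u are matched into the four
  outer vertices b_{u,x,i}, b_{u,y,i}; together they form an 8-cycle, of which \<mu> uses one of
  the two perfect matchings. Switching to the other one composes \<mu> with a 4-cycle of X,
  so it reverses the sign, and it keeps e_0 and e_1. With a fixed choice of the doubled edge
  this is a sign-reversing involution on the non-uniform perfect matchings, so they cancel.\<close>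

section \<open>Leibniz expansion over matchings\<close>

lemma prod_if_1_0:
  "finite A \<Longrightarrow> (\<Prod>i\<in>A. if P i then 1 else 0 :: 'a :: comm_semiring_1) = (if \<forall>i\<in>A. P i then 1 else 0)"
  by (induction A rule: finite_induct) auto

lemma det_mat_if_1_0:
  "det (mat n n (\<lambda>(i, j). if P i j then 1 else 0) :: 'a :: comm_ring_1 mat) =
   of_int (\<Sum>p | p permutes {0..<n} \<and> (\<forall>i<n. P i (p i)). sign p)"
proof -
  let ?A = "mat n n (\<lambda>(i, j). if P i j then 1 else 0) :: 'a mat"
  let ?S = "{p. p permutes {0..<n}}"
  have "det ?A = (\<Sum>p\<in>?S. signof p * (\<Prod>i = 0..<n. ?A $$ (i, p i)))"
    by (rule det_def') simp
  also have "\<dots> = (\<Sum>p\<in>?S. if \<forall>i<n. P i (p i) then signof p else 0)"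
  proof (rule sum.cong[OF refl])
    fix p assume "p \<in> ?S"
    then have "p i < n" if "i < n" for i
      using that permutes_in_image[of p "{0..<n}" i] by simp
    then have "(\<Prod>i = 0..<n. ?A $$ (i, p i)) = (\<Prod>i = 0..<n. if P i (p i) then 1 else 0)"
      by (intro prod.cong) auto
    also have "\<dots> = (if \<forall>i<n. P i (p i) then 1 else 0)"
      by (simp add: prod_if_1_0)
    finally show "signof p * (\<Prod>i = 0..<n. ?A $$ (i, p i)) =
        (if \<forall>i<n. P i (p i) then signof p else 0)"
      by auto
  qed
  also have "\<dots> = (\<Sum>p\<in>{p\<in>?S. \<forall>i<n. P i (p i)}. signof p)"
    by (rule sum.inter_filter[symmetric]) (simp add: finite_permutations)
  finally show ?thesis
    by simp
qed

lemma sum_plus_minus_one: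
  fixes f :: "'a \<Rightarrow> int"
  assumes "finite A" and "\<And>x. x \<in> A \<Longrightarrow> f x = 1 \<or> f x = -1"
  shows "(\<Sum>x\<in>A. f x) = int (card {x\<in>A. f x = 1}) - int (card {x\<in>A. f x = -1})"
proof -
  have "(\<Sum>x\<in>A. f x) = (\<Sum>x\<in>A. of_bool (f x = 1) - of_bool (f x = -1))"
    using assms(2) by (intro sum.cong) fastforce+
  also have "\<dots> = int (card {x\<in>A. f x = 1}) - int (card {x\<in>A. f x = -1})"
    using assms(1) by (simp add: sum_subtractf Int_def conj_commute)
  finally show ?thesis .
qed

lemma the_elem_Diff_card_2:
  assumes "card C = 2" and "a \<in> C"
  shows "the_elem (C - {a}) \<in> C - {a}" and "the_elem (C - {the_elem (C - {a})}) = a"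
proof -
  have "finite C"
    using assms(1) by (intro card_ge_0_finite) simp
  then have "card (C - {a}) = 1"
    using assms by simp
  then obtain b where b: "C - {a} = {b}"
    by (rule card_1_singletonE)
  then have "C - {b} = {a}"
    using assms(2) by blast
  with b show "the_elem (C - {a}) \<in> C - {a}" and "the_elem (C - {the_elem (C - {a})}) = a"
    by simp_all
qed

locale indexed_pair =
  fixes X Y :: "'a set" and n :: nat and \<eta> \<eta>' :: "'a \<Rightarrow> nat"
  assumes bij_\<eta>: "bij_betw \<eta> X {0..<n}" and bij_\<eta>': "bij_betw \<eta>' Y {0..<n}"
begin

abbreviation "\<iota> \<equiv> the_inv_into X \<eta>"
abbreviation "\<iota>' \<equiv> the_inv_into Y \<eta>'"

lemma \<iota>_\<eta> [simp]: "x \<in> X \<Longrightarrow> \<iota> (\<eta> x) = x"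
  using bij_\<eta> by (simp add: bij_betw_def the_inv_into_f_f)

lemma \<eta>_\<iota> [simp]: "i < n \<Longrightarrow> \<eta> (\<iota> i) = i"
  using bij_\<eta> by (simp add: f_the_inv_into_f_bij_betw)

lemma \<iota>'_\<eta>' [simp]: "y \<in> Y \<Longrightarrow> \<iota>' (\<eta>' y) = y"
  using bij_\<eta>' by (simp add: bij_betw_def the_inv_into_f_f)

lemma \<eta>'_\<iota>' [simp]: "i < n \<Longrightarrow> \<eta>' (\<iota>' i) = i"
  using bij_\<eta>' by (simp add: f_the_inv_into_f_bij_betw)

lemma \<eta>_less: "x \<in> X \<Longrightarrow> \<eta> x < n"
  using bij_\<eta> by (auto dest: bij_betwE)

lemma bij_betw_\<iota>: "bij_betw \<iota> {0..<n} X"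
  using bij_\<eta> by (rule bij_betw_the_inv_into)

lemma bij_betw_\<iota>': "bij_betw \<iota>' {0..<n} Y"
  using bij_\<eta>' by (rule bij_betw_the_inv_into)

lemma \<iota>_in: "i < n \<Longrightarrow> \<iota> i \<in> X"
  using bij_betw_\<iota> by (auto dest: bij_betwE)

lemma \<iota>'_in: "i < n \<Longrightarrow> \<iota>' i \<in> Y"
  using bij_betw_\<iota>' by (auto dest: bij_betwE)

lemma \<iota>_eq_iff: "i < n \<Longrightarrow> x \<in> X \<Longrightarrow> \<iota> i = x \<longleftrightarrow> i = \<eta> x"
  by auto

definition perm_of :: "('a \<Rightarrow> 'a) \<Rightarrow> nat \<Rightarrow> nat" where
  "perm_of \<mu> = (\<lambda>i. if i < n then \<eta>' (\<mu> (\<iota> i)) else i)"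

definition matching_of :: "(nat \<Rightarrow> nat) \<Rightarrow> 'a \<Rightarrow> 'a" where
  "matching_of p = restrict (\<lambda>x. \<iota>' (p (\<eta> x))) X"

lemma perm_of_permutes:
  assumes "bij_betw \<mu> X Y"
  shows "perm_of \<mu> permutes {0..<n}"
proof (rule bij_imp_permutes)
  have "bij_betw (\<eta>' \<circ> \<mu> \<circ> \<iota>) {0..<n} {0..<n}"
    using bij_betw_trans[OF bij_betw_trans[OF bij_betw_\<iota> assms] bij_\<eta>'] by (simp add: comp_assoc)
  then show "bij_betw (perm_of \<mu>) {0..<n} {0..<n}"
    by (rule bij_betw_cong[THEN iffD1, rotated]) (simp add: perm_of_def)
qed (simp add: perm_of_def)

lemma matching_of_perm_of:
  assumes "\<mu> \<in> X \<rightarrow>\<^sub>E Y"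
  shows "matching_of (perm_of \<mu>) = \<mu>"
proof
  fix x
  show "matching_of (perm_of \<mu>) x = \<mu> x"
  proof (cases "x \<in> X")
    case True
    moreover have "\<mu> x \<in> Y"
      using PiE_mem[OF assms True] .
    ultimately show ?thesis
      by (simp add: matching_of_def perm_of_def \<eta>_less)
  next
    case False
    then show ?thesis
      using PiE_arb[OF assms False] by (simp add: matching_of_def)
  qed
qed

lemma perm_of_matching_of:
  assumes "p permutes {0..<n}"
  shows "perm_of (matching_of p) = p"
proof
  fix i
  show "perm_of (matching_of p) i = p i"
    using permutes_in_image[OF assms, of i] permutes_not_in[OF assms, of i]
    by (simp add: perm_of_def matching_of_def \<iota>_in)
qed

lemma bij_betw_perm_of:
  "bij_betw perm_of {\<mu> \<in> X \<rightarrow>\<^sub>E Y. bij_betw \<mu> X Y \<and> (\<forall>x\<in>X. R x (\<mu> x))}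
     {p. p permutes {0..<n} \<and> (\<forall>i<n. R (\<iota> i) (\<iota>' (p i)))}"
  (is "bij_betw _ ?M ?P")
proof (rule bij_betw_byWitness[where f' = matching_of])
  show "\<forall>\<mu>\<in>?M. matching_of (perm_of \<mu>) = \<mu>"
    by (simp add: matching_of_perm_of)
  show "\<forall>p\<in>?P. perm_of (matching_of p) = p"
    by (simp add: perm_of_matching_of)
  show "perm_of ` ?M \<subseteq> ?P"
  proof (rule image_subsetI)
    fix \<mu>
    assume "\<mu> \<in> ?M"
    then show "perm_of \<mu> \<in> ?P"
      using perm_of_permutes PiE_mem[of \<mu> X "\<lambda>_. Y"] by (auto simp: perm_of_def \<iota>_in)
  qed
  show "matching_of ` ?P \<subseteq> ?M"
  proof (rule image_subsetI)
    fix p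
    assume p: "p \<in> ?P"
    have "bij_betw (\<iota>' \<circ> p \<circ> \<eta>) X Y"
      using p bij_betw_trans[OF bij_betw_trans[OF bij_\<eta> permutes_imp_bij] bij_betw_\<iota>']
      by (simp add: comp_assoc)
    then have "bij_betw (matching_of p) X Y"
      by (rule bij_betw_cong[THEN iffD1, rotated]) (simp add: matching_of_def)
    moreover have "p (\<eta> x) < n" and "R x (\<iota>' (p (\<eta> x)))" if "x \<in> X" for x
      using p that \<eta>_less[OF that] permutes_in_image[of p "{0..<n}" "\<eta> x"] by auto
    ultimately show "matching_of p \<in> ?M"
      by (auto simp: matching_of_def \<iota>'_in)
  qed
qed

lemma perm_of_comp_transpose:
  assumes "a \<in> X" and "b \<in> X"
  shows "perm_of (\<mu> \<circ> transpose a b) = perm_of \<mu> \<circ> transpose (\<eta> a) (\<eta> b)"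
proof
  fix i
  show "perm_of (\<mu> \<circ> transpose a b) i = (perm_of \<mu> \<circ> transpose (\<eta> a) (\<eta> b)) i"
  proof (cases "i < n")
    case True
    have "transpose (\<eta> a) (\<eta> b) i < n"
      using True assms by (simp add: transpose_def \<eta>_less)
    moreover have "transpose a b (\<iota> i) = \<iota> (transpose (\<eta> a) (\<eta> b) i)"
      using True assms by (auto simp: transpose_def \<iota>_eq_iff)
    ultimately show ?thesis
      using True by (simp add: perm_of_def)
  next
    case False
    then show ?thesis
      using assms \<eta>_less by (auto simp: perm_of_def transpose_def)
  qed
qed

lemma sign_perm_of_comp_transpose:
  assumes "bij_betw \<mu> X Y" and "a \<in> X" and "b \<in> X" and "a \<noteq> b"
  shows "sign (perm_of (\<mu> \<circ> transpose a b)) = - sign (perm_of \<mu>)"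
proof -
  have "permutation (perm_of \<mu>)"
    using perm_of_permutes[OF assms(1)] by (rule permutes_imp_permutation[rotated]) simp
  moreover have "\<eta> a \<noteq> \<eta> b"
    using bij_\<eta> assms(2-4) by (auto simp: bij_betw_def inj_on_def)
  ultimately show ?thesis
    using assms(2,3)
    by (simp add: perm_of_comp_transpose sign_compose permutation_swap_id sign_swap_id)
qed

lemma bij_betw_comp_transpose:
  assumes "bij_betw \<mu> X Y" and "a \<in> X" and "b \<in> X"
  shows "bij_betw (\<mu> \<circ> transpose a b) X Y"
  using assms by (intro bij_betw_trans[OF permutes_imp_bij] permutes_swap_id)

end

lemma Xset_InnerV_iff [simp]:
  "InnerV w S \<in> Xset U V E \<longleftrightarrow> w \<in> U \<and> S \<subseteq> nbrs E w \<and> even (card S)"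
  by (auto simp: Xset_def inner_set_def outer_set_def)

lemma Xset_OuterV_iff [simp]: "OuterV w t i \<in> Xset U V E \<longleftrightarrow> w \<in> V \<and> t \<in> nbrs E w"
  by (auto simp: Xset_def inner_set_def outer_set_def)

lemma inner_set_InnerV_iff:
  "InnerV w S \<in> inner_set E u \<longleftrightarrow> w = u \<and> S \<subseteq> nbrs E u \<and> even (card S)"
  by (auto simp: inner_set_def)

lemma hadj_InnerV_iff:
  "hadj E (InnerV w S) z \<longleftrightarrow>
     (\<exists>t i. z = OuterV w t i \<and> S \<subseteq> nbrs E w \<and> even (card S) \<and> t \<in> nbrs E w \<and> (i \<longleftrightarrow> t \<in> S))"
  by (auto simp: hadj_def gadj0_def)

locale gadget_graph = indexed_pair "Xset U V E" "Yset U V E" n \<eta> \<eta>'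
  for U V :: "'v set" and E :: "'v \<Rightarrow> 'v \<Rightarrow> bool" and n \<eta> \<eta>' +
  assumes cubic: "cubic_bipartite U V E"
begin

abbreviation "PM \<equiv> perfect_matchings U V E"
abbreviation "UM \<equiv> uniform_matchings U V E"
abbreviation "msign \<equiv> matching_sign U V E n \<eta> \<eta>'"

lemma matching_sign_eq: "msign \<mu> = sign (perm_of \<mu>)"
  by (simp add: matching_sign_def perm_of_def fun_eq_iff)

lemma matching_sign_cases: "msign \<mu> = 1 \<or> msign \<mu> = -1"
  by (simp add: matching_sign_eq sign_def)

lemma finite_PM: "finite PM"
proof (rule finite_subset)
  show "PM \<subseteq> Xset U V E \<rightarrow>\<^sub>E Yset U V E"
    by (auto simp: perfect_matchings_def)
  show "finite (Xset U V E \<rightarrow>\<^sub>E Yset U V E)"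
    using bij_\<eta> bij_\<eta>' by (intro finite_PiE) (auto dest: bij_betw_finite)
qed

lemma det_biadj_matrix: "det (biadj_matrix U V E n \<eta> \<eta>') = (\<Sum>\<mu>\<in>PM. msign \<mu>)"
proof -
  have "det (biadj_matrix U V E n \<eta> \<eta>') =
      (\<Sum>p | p permutes {0..<n} \<and> (\<forall>i<n. hadj E (\<iota> i) (\<iota>' (p i))). sign p)"
    by (simp add: biadj_matrix_def det_mat_if_1_0)
  also have "\<dots> = (\<Sum>\<mu>\<in>PM. sign (perm_of \<mu>))"
    using sum.reindex_bij_betw[OF bij_betw_perm_of[of "hadj E"], of sign]
    by (simp add: perfect_matchings_def)
  finally show ?thesis
    by (simp add: matching_sign_eq)
qed

lemma perfect_matchingD:
  assumes "\<mu> \<in> PM"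
  shows "\<mu> \<in> Xset U V E \<rightarrow>\<^sub>E Yset U V E" and "bij_betw \<mu> (Xset U V E) (Yset U V E)"
    and "inj_on \<mu> (Xset U V E)" and "\<And>x. x \<in> Xset U V E \<Longrightarrow> hadj E x (\<mu> x)"
  using assms by (auto simp: perfect_matchings_def bij_betw_def)

end

section \<open>Rematching a gadget\<close>

lemma even_subset_of_three:
  assumes "S \<subseteq> {v, x, y}" and "v \<noteq> x" "v \<noteq> y" "x \<noteq> y" and "even (card S)"
  shows "S = {} \<or> S = {x, y} \<or> S = {v, x} \<or> S = {v, y}"
proof -
  have "S = (if v \<in> S then {v} else {}) \<union> (if x \<in> S then {x} else {}) \<union> (if y \<in> S then {y} else {})"
    using assms(1) by auto
  then show ?thesis
    using assms(2-5) by (auto split: if_splits)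
qed

lemma inner_set_of_three:
  assumes N: "nbrs E u = {v, x, y}" and vx: "v \<noteq> x" and vy: "v \<noteq> y" and xy: "x \<noteq> y"
  shows "inner_set E u = {InnerV u {}, InnerV u {v, x}, InnerV u {x, y}, InnerV u {v, y}}"
proof
  show "inner_set E u \<subseteq> {InnerV u {}, InnerV u {v, x}, InnerV u {x, y}, InnerV u {v, y}}"
  proof
    fix z
    assume "z \<in> inner_set E u"
    then obtain S where z: "z = InnerV u S" "S \<subseteq> {v, x, y}" "even (card S)"
      using N by (auto simp: inner_set_def)
    then show "z \<in> {InnerV u {}, InnerV u {v, x}, InnerV u {x, y}, InnerV u {v, y}}"
      using even_subset_of_three[OF z(2) vx vy xy z(3)] by auto
  qed
  show "{InnerV u {}, InnerV u {v, x}, InnerV u {x, y}, InnerV u {v, y}} \<subseteq> inner_set E u"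
    using N vx vy xy by (simp add: inner_set_InnerV_iff)
qed

definition rematch_targets :: "('v \<Rightarrow> 'v \<Rightarrow> bool) \<Rightarrow> 'v \<Rightarrow> 'v \<Rightarrow> 'v set \<Rightarrow> 'v hvert set" where
  "rematch_targets E u v S = (\<lambda>t. OuterV u t (t \<in> S)) ` (nbrs E u - {v})"

fun inner_label :: "'v hvert \<Rightarrow> 'v set" where
  "inner_label (InnerV w S) = S"
| "inner_label (OuterV w t i) = {}"

text \<open>The new partner of a_{u,S} depends only on its old one, which makes rematching an
  involution.\<close>
definition rematch :: "('v \<Rightarrow> 'v \<Rightarrow> bool) \<Rightarrow> 'v \<Rightarrow> 'v \<Rightarrow> ('v hvert \<Rightarrow> 'v hvert) \<Rightarrow> 'v hvert \<Rightarrow> 'v hvert"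
  where "rematch E u v \<mu> z =
    (if z \<in> inner_set E u then the_elem (rematch_targets E u v (inner_label z) - {\<mu> z}) else \<mu> z)"

lemma card_rematch_targets:
  assumes "card (nbrs E u) = 3" and "v \<in> nbrs E u"
  shows "card (rematch_targets E u v S) = 2"
proof -
  have "finite (nbrs E u)"
    using assms(1) by (metis card.infinite zero_neq_numeral)
  moreover have "inj_on (\<lambda>t. OuterV u t (t \<in> S)) (nbrs E u - {v})"
    by (rule inj_onI) simp
  ultimately show ?thesis
    using assms by (simp add: rematch_targets_def card_image card_Diff_singleton)
qed

lemma rematch_targets_of_three:
  assumes "nbrs E u = {v, x, y}" and "v \<noteq> x" and "v \<noteq> y"
  shows "rematch_targets E u v S = {OuterV u x (x \<in> S), OuterV u y (y \<in> S)}"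
  using assms by (auto simp: rematch_targets_def)

lemma hadj_rematch_targets:
  "InnerV u S \<in> inner_set E u \<Longrightarrow> w \<in> rematch_targets E u v S \<Longrightarrow> hadj E (InnerV u S) w"
  by (auto simp: rematch_targets_def hadj_InnerV_iff inner_set_InnerV_iff)

context gadget_graph
begin

lemma edge_from_U:
  assumes "u \<in> U" and "E u v"
  shows "v \<in> V" and "u \<notin> V" and "E v u" and "card (nbrs E u) = 3" and "v \<in> nbrs E u"
proof -
  note cubic' = cubic[unfolded cubic_bipartite_def]
  show "u \<notin> V"
    using assms(1) cubic' by blast
  then show "v \<in> V"
    using assms cubic' by blast
  show "E v u"
    using assms(2) cubic' by blast
  show "card (nbrs E u) = 3"
    using assms(1) cubic' by blast
  show "v \<in> nbrs E u"
    using assms(2) by (simp add: nbrs_def)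
qed

text \<open>As u \<in> U, the vertex b_{v,u,i} lies in X, so this says that e_0 and e_1 both belong
  to \<mu>.\<close>
definition doubled_edge :: "('v hvert \<Rightarrow> 'v hvert) \<Rightarrow> 'v \<Rightarrow> 'v \<Rightarrow> bool" where
  "doubled_edge \<mu> u v \<longleftrightarrow> u \<in> U \<and> E u v \<and>
     \<mu> (OuterV v u False) = OuterV u v False \<and> \<mu> (OuterV v u True) = OuterV u v True"

lemma in_matching_edge_iff:
  assumes "u \<in> U" and "E u v"
  shows "in_matching (Xset U V E) \<mu> (OuterV v u i) (OuterV u v i) \<longleftrightarrow> \<mu> (OuterV v u i) = OuterV u v i"
    and "in_matching (Xset U V E) \<mu> (OuterV u v i) (OuterV v u i) \<longleftrightarrow> \<mu> (OuterV v u i) = OuterV u v i"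
  using edge_from_U[OF assms] by (auto simp: in_matching_def nbrs_def)

lemma uniform_matchings_iff:
  assumes "\<mu> \<in> PM"
  shows "\<mu> \<in> UM \<longleftrightarrow> \<not> (\<exists>u v. doubled_edge \<mu> u v)"
proof -
  have "(\<forall>u v. E u v \<longrightarrow>
      \<not> (in_matching (Xset U V E) \<mu> (OuterV v u False) (OuterV u v False) \<and>
         in_matching (Xset U V E) \<mu> (OuterV v u True) (OuterV u v True)))
    \<longleftrightarrow> \<not> (\<exists>u v. doubled_edge \<mu> u v)" (is "?uniform \<longleftrightarrow> _")
  proof
    assume uniform: ?uniform
    show "\<not> (\<exists>u v. doubled_edge \<mu> u v)"
    proof
      assume "\<exists>u v. doubled_edge \<mu> u v"
      then obtain u v where dbl: "doubled_edge \<mu> u v"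
        by blast
      then have "u \<in> U" and "E u v"
        by (auto simp: doubled_edge_def)
      then show False
        using uniform[rule_format, OF \<open>E u v\<close>] dbl
        by (simp add: doubled_edge_def in_matching_edge_iff)
    qed
  next
    assume no_doubled: "\<not> (\<exists>u v. doubled_edge \<mu> u v)"
    show ?uniform
    proof (intro allI impI)
      fix u v
      assume "E u v"
      then have "E v u" and "u \<in> U \<or> v \<in> U"
        using cubic unfolding cubic_bipartite_def by blast+
      then show "\<not> (in_matching (Xset U V E) \<mu> (OuterV v u False) (OuterV u v False) \<and>
          in_matching (Xset U V E) \<mu> (OuterV v u True) (OuterV u v True))"
        using no_doubled \<open>E u v\<close> by (auto simp: doubled_edge_def in_matching_edge_iff)
    qed
  qed
  then show ?thesis
    using assms by (simp add: uniform_matchings_def)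
qed

lemma doubled_edge_rematch: "doubled_edge (rematch E a b \<mu>) u v \<longleftrightarrow> doubled_edge \<mu> u v"
  by (simp add: doubled_edge_def rematch_def inner_set_def)

lemma matched_into_rematch_targets:
  assumes \<mu>: "\<mu> \<in> PM" and dbl: "doubled_edge \<mu> u v" and a: "InnerV u S \<in> inner_set E u"
  shows "\<mu> (InnerV u S) \<in> rematch_targets E u v S"
proof -
  have u: "u \<in> U" "E u v"
    using dbl by (auto simp: doubled_edge_def)
  have aX: "InnerV u S \<in> Xset U V E"
    using a u by (simp add: inner_set_InnerV_iff)
  obtain t i where t: "\<mu> (InnerV u S) = OuterV u t i" "t \<in> nbrs E u" "i \<longleftrightarrow> t \<in> S"
    using perfect_matchingD(4)[OF \<mu> aX] by (auto simp: hadj_InnerV_iff)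
  have "t \<noteq> v"
  proof
    \<comment> \<open>b_{u,v,0} and b_{u,v,1} are already taken by the doubled edge.\<close>
    assume "t = v"
    then have "\<mu> (InnerV u S) = \<mu> (OuterV v u i)"
      using t(1) dbl by (cases i) (simp_all add: doubled_edge_def)
    moreover have "OuterV v u i \<in> Xset U V E"
      using edge_from_U[OF u] by (simp add: nbrs_def)
    ultimately show False
      using perfect_matchingD(3)[OF \<mu>] aX by (auto dest: inj_onD)
  qed
  then show ?thesis
    using t by (auto simp: rematch_targets_def)
qed

lemma rematch_inner:
  assumes "\<mu> \<in> PM" and "doubled_edge \<mu> u v" and "InnerV u S \<in> inner_set E u"
  shows "rematch E u v \<mu> (InnerV u S) \<in> rematch_targets E u v S - {\<mu> (InnerV u S)}"
    and "rematch E u v (rematch E u v \<mu>) (InnerV u S) = \<mu> (InnerV u S)"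
proof -
  have u: "u \<in> U" "E u v"
    using assms(2) by (auto simp: doubled_edge_def)
  have "card (rematch_targets E u v S) = 2"
    using edge_from_U(4,5)[OF u] by (rule card_rematch_targets)
  from the_elem_Diff_card_2[OF this matched_into_rematch_targets[OF assms]]
  show "rematch E u v \<mu> (InnerV u S) \<in> rematch_targets E u v S - {\<mu> (InnerV u S)}"
    and "rematch E u v (rematch E u v \<mu>) (InnerV u S) = \<mu> (InnerV u S)"
    using assms(3) by (simp_all add: rematch_def)
qed

lemma rematch_rematch:
  assumes "\<mu> \<in> PM" and "doubled_edge \<mu> u v"
  shows "rematch E u v (rematch E u v \<mu>) = \<mu>"
proof
  fix z
  show "rematch E u v (rematch E u v \<mu>) z = \<mu> z"
  proof (cases "z \<in> inner_set E u")
    case True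
    then obtain S where "z = InnerV u S"
      by (auto simp: inner_set_def)
    then show ?thesis
      using rematch_inner(2)[OF assms] True by simp
  next
    case False
    then show ?thesis
      by (simp add: rematch_def)
  qed
qed

lemma hadj_rematch:
  assumes "\<mu> \<in> PM" and "doubled_edge \<mu> u v" and "z \<in> Xset U V E"
  shows "hadj E z (rematch E u v \<mu> z)"
proof (cases "z \<in> inner_set E u")
  case True
  then obtain S where "z = InnerV u S"
    by (auto simp: inner_set_def)
  then show ?thesis
    using rematch_inner(1)[OF assms(1,2)] True by (auto intro: hadj_rematch_targets)
next
  case False
  then show ?thesis
    using perfect_matchingD(4)[OF assms(1,3)] by (simp add: rematch_def)
qed

lemma rematch_gadget_cycle:
  assumes \<mu>: "\<mu> \<in> PM" and dbl: "doubled_edge \<mu> u v"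
    and N: "nbrs E u = {v, x, y}" and vx: "v \<noteq> x" and vy: "v \<noteq> y" and xy: "x \<noteq> y"
    and \<mu>0: "\<mu> (InnerV u {}) = OuterV u x False"
  defines "a0 \<equiv> InnerV u {}" and "avx \<equiv> InnerV u {v, x}"
    and "axy \<equiv> InnerV u {x, y}" and "avy \<equiv> InnerV u {v, y}"
  shows "rematch E u v \<mu> = \<mu> \<circ> transpose a0 avy \<circ> transpose a0 axy \<circ> transpose a0 avx"
proof -
  have u: "u \<in> U"
    using dbl by (simp add: doubled_edge_def)
  have distinct: "a0 \<noteq> avx" "a0 \<noteq> axy" "a0 \<noteq> avy" "avx \<noteq> axy" "avx \<noteq> avy" "axy \<noteq> avy"
    using vx vy xy by (auto simp: a0_def avx_def axy_def avy_def doubleton_eq_iff)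
  have inner: "inner_set E u = {a0, avx, axy, avy}"
    using inner_set_of_three[OF N vx vy xy] by (simp add: a0_def avx_def axy_def avy_def)
  have targets: "rematch_targets E u v S = {OuterV u x (x \<in> S), OuterV u y (y \<in> S)}" for S
    using rematch_targets_of_three[OF N vx vy] .
  have in_targets: "\<mu> (InnerV u S) \<in> {OuterV u x (x \<in> S), OuterV u y (y \<in> S)}"
    if "InnerV u S \<in> inner_set E u" for S
    using matched_into_rematch_targets[OF \<mu> dbl that] by (simp add: targets)
  have rematch_in_targets: "rematch E u v \<mu> (InnerV u S) \<in>
      {OuterV u x (x \<in> S), OuterV u y (y \<in> S)} - {\<mu> (InnerV u S)}"
    if "InnerV u S \<in> inner_set E u" for S
    using rematch_inner(1)[OF \<mu> dbl that] by (simp add: targets)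
  have "inner_set E u \<subseteq> Xset U V E"
    using u by (auto simp: inner_set_def)
  then have inj: "\<mu> a \<noteq> \<mu> b" if "a \<in> inner_set E u" "b \<in> inner_set E u" "a \<noteq> b" for a b
    using inj_on_contraD[OF perfect_matchingD(3)[OF \<mu>]] that by blast
  \<comment> \<open>Going round the 8-cycle, starting from \<mu>(a_{u,\<emptyset>}) = b_{u,x,0}:\<close>
  have \<mu>vy: "\<mu> avy = OuterV u y True"
    using in_targets[of "{v, y}"] inj[of avy a0] \<mu>0 distinct inner vx vy xy
    by (auto simp: a0_def avy_def)
  have \<mu>xy: "\<mu> axy = OuterV u x True"
    using in_targets[of "{x, y}"] inj[of axy avy] \<mu>vy distinct inner
    by (auto simp: axy_def)
  have \<mu>vx: "\<mu> avx = OuterV u y False"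
    using in_targets[of "{v, x}"] inj[of avx axy] \<mu>xy distinct inner vx vy xy
    by (auto simp: avx_def)
  have "rematch E u v \<mu> a0 = \<mu> avx"
    using rematch_in_targets[of "{}"] inner \<mu>0 \<mu>vx by (auto simp: a0_def)
  moreover have "rematch E u v \<mu> avx = \<mu> axy"
    using rematch_in_targets[of "{v, x}"] inner \<mu>vx \<mu>xy vx vy xy by (auto simp: avx_def)
  moreover have "rematch E u v \<mu> axy = \<mu> avy"
    using rematch_in_targets[of "{x, y}"] inner \<mu>xy \<mu>vy by (auto simp: axy_def)
  moreover have "rematch E u v \<mu> avy = \<mu> a0"
    using rematch_in_targets[of "{v, y}"] inner \<mu>vy \<mu>0 vx vy xy by (auto simp: avy_def a0_def)
  moreover have "rematch E u v \<mu> z = \<mu> z" if "z \<notin> {a0, avx, axy, avy}" for z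
    using that inner by (simp add: rematch_def)
  ultimately show ?thesis
    using distinct by (auto simp: fun_eq_iff transpose_def)
qed

lemma rematch_eq_comp_transpositions:
  assumes \<mu>: "\<mu> \<in> PM" and dbl: "doubled_edge \<mu> u v"
  obtains a b c d where "a \<in> Xset U V E" "b \<in> Xset U V E" "c \<in> Xset U V E" "d \<in> Xset U V E"
    and "a \<noteq> b" "a \<noteq> c" "a \<noteq> d"
    and "rematch E u v \<mu> = \<mu> \<circ> transpose a d \<circ> transpose a c \<circ> transpose a b"
proof -
  have u: "u \<in> U" "E u v"
    using dbl by (auto simp: doubled_edge_def)
  note N3 = edge_from_U(4,5)[OF u]
  have "InnerV u {} \<in> inner_set E u"
    by (simp add: inner_set_InnerV_iff)
  from matched_into_rematch_targets[OF \<mu> dbl this]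
  obtain x where x: "x \<in> nbrs E u" "x \<noteq> v" "\<mu> (InnerV u {}) = OuterV u x False"
    by (auto simp: rematch_targets_def)
  have "finite (nbrs E u)"
    using N3(1) by (metis card.infinite zero_neq_numeral)
  then have "card (nbrs E u - {v, x}) = 1"
    using N3 x by (simp add: card_Diff_subset)
  then obtain y where y: "nbrs E u - {v, x} = {y}"
    by (auto simp: card_1_singleton_iff)
  then have N: "nbrs E u = {v, x, y}" and "v \<noteq> y" "x \<noteq> y"
    using N3(2) x(1) by auto
  note cycle = rematch_gadget_cycle[OF \<mu> dbl N x(2)[symmetric] \<open>v \<noteq> y\<close> \<open>x \<noteq> y\<close> x(3)]
  show ?thesis
    by (rule that[OF _ _ _ _ _ _ _ cycle]) (use u N \<open>x \<noteq> v\<close> \<open>v \<noteq> y\<close> \<open>x \<noteq> y\<close> in auto)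
qed

lemma rematch_perfect_matching:
  assumes \<mu>: "\<mu> \<in> PM" and dbl: "doubled_edge \<mu> u v"
  shows "rematch E u v \<mu> \<in> PM" and "msign (rematch E u v \<mu>) = - msign \<mu>"
proof -
  obtain a b c d where X: "a \<in> Xset U V E" "b \<in> Xset U V E" "c \<in> Xset U V E" "d \<in> Xset U V E"
    and ne: "a \<noteq> b" "a \<noteq> c" "a \<noteq> d"
    and eq: "rematch E u v \<mu> = \<mu> \<circ> transpose a d \<circ> transpose a c \<circ> transpose a b"
    by (rule rematch_eq_comp_transpositions[OF \<mu> dbl])
  have bij0: "bij_betw \<mu> (Xset U V E) (Yset U V E)"
    using perfect_matchingD(2)[OF \<mu>] .
  have bij1: "bij_betw (\<mu> \<circ> transpose a d) (Xset U V E) (Yset U V E)"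
    using bij_betw_comp_transpose[OF bij0 X(1,4)] .
  have bij2: "bij_betw (\<mu> \<circ> transpose a d \<circ> transpose a c) (Xset U V E) (Yset U V E)"
    using bij_betw_comp_transpose[OF bij1 X(1,3)] .
  have bij: "bij_betw (rematch E u v \<mu>) (Xset U V E) (Yset U V E)"
    unfolding eq using bij_betw_comp_transpose[OF bij2 X(1,2)] .
  show "msign (rematch E u v \<mu>) = - msign \<mu>"
    unfolding matching_sign_eq eq
    using sign_perm_of_comp_transpose[OF bij0 X(1,4) ne(3)]
      sign_perm_of_comp_transpose[OF bij1 X(1,3) ne(2)]
      sign_perm_of_comp_transpose[OF bij2 X(1,2) ne(1)]
    by simp
  have "inner_set E u \<subseteq> Xset U V E"
    using dbl by (auto simp: doubled_edge_def inner_set_def)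
  have "rematch E u v \<mu> \<in> Xset U V E \<rightarrow>\<^sub>E Yset U V E"
  proof (rule PiE_I)
    show "rematch E u v \<mu> z \<in> Yset U V E" if "z \<in> Xset U V E" for z
      using bij_betwE[OF bij] that by blast
    show "rematch E u v \<mu> z = undefined" if "z \<notin> Xset U V E" for z
      using that \<open>inner_set E u \<subseteq> Xset U V E\<close> PiE_arb[OF perfect_matchingD(1)[OF \<mu>]]
      by (auto simp: rematch_def)
  qed
  then show "rematch E u v \<mu> \<in> PM"
    using bij hadj_rematch[OF \<mu> dbl] by (simp add: perfect_matchings_def)
qed

section \<open>Cancellation of non-uniform matchings\<close>

definition doubled_edge_of :: "('v hvert \<Rightarrow> 'v hvert) \<Rightarrow> 'v \<times> 'v" where
  "doubled_edge_of \<mu> = (SOME (u, v). doubled_edge \<mu> u v)"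

definition switch :: "('v hvert \<Rightarrow> 'v hvert) \<Rightarrow> 'v hvert \<Rightarrow> 'v hvert" where
  "switch \<mu> = rematch E (fst (doubled_edge_of \<mu>)) (snd (doubled_edge_of \<mu>)) \<mu>"

lemma switch_nonuniform:
  assumes "\<mu> \<in> PM - UM"
  shows "switch \<mu> \<in> PM - UM" and "switch (switch \<mu>) = \<mu>" and "msign (switch \<mu>) = - msign \<mu>"
proof -
  have \<mu>: "\<mu> \<in> PM"
    using assms by simp
  obtain u v where uv: "doubled_edge_of \<mu> = (u, v)"
    by (cases "doubled_edge_of \<mu>")
  have "\<exists>e. case e of (u, v) \<Rightarrow> doubled_edge \<mu> u v"
    using assms uniform_matchings_iff[OF \<mu>] by auto
  then have "case doubled_edge_of \<mu> of (u, v) \<Rightarrow> doubled_edge \<mu> u v"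
    unfolding doubled_edge_of_def by (rule someI_ex)
  then have dbl: "doubled_edge \<mu> u v"
    by (simp add: uv)
  have switch: "switch \<mu> = rematch E u v \<mu>"
    by (simp add: switch_def uv)
  have "doubled_edge_of (rematch E u v \<mu>) = (u, v)"
    using uv by (simp add: doubled_edge_of_def doubled_edge_rematch)
  then show "switch (switch \<mu>) = \<mu>"
    using rematch_rematch[OF \<mu> dbl] uv by (simp add: switch switch_def)
  have "switch \<mu> \<in> PM"
    using rematch_perfect_matching(1)[OF \<mu> dbl] by (simp add: switch)
  moreover from this have "switch \<mu> \<notin> UM"
    using dbl by (auto simp: switch doubled_edge_rematch uniform_matchings_iff)
  ultimately show "switch \<mu> \<in> PM - UM"
    by simp
  show "msign (switch \<mu>) = - msign \<mu>"
    using rematch_perfect_matching(2)[OF \<mu> dbl] by (simp add: switch)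
qed

lemma sum_perfect_matchings_eq_sum_uniform: "(\<Sum>\<mu>\<in>PM. msign \<mu>) = (\<Sum>\<mu>\<in>UM. msign \<mu>)"
proof -
  have "UM \<subseteq> PM"
    by (auto simp: uniform_matchings_def)
  then have "(\<Sum>\<mu>\<in>PM. msign \<mu>) = (\<Sum>\<mu>\<in>PM - UM. msign \<mu>) + (\<Sum>\<mu>\<in>UM. msign \<mu>)"
    using finite_PM by (rule sum.subset_diff)
  moreover have "(\<Sum>\<mu>\<in>PM - UM. msign \<mu>) = 0"
  proof (rule sum_involution_eq_0[where h = switch])
    fix \<mu>
    assume \<mu>: "\<mu> \<in> PM - UM"
    show "msign (switch \<mu>) + msign \<mu> = 0" "switch \<mu> \<in> PM - UM" "switch (switch \<mu>) = \<mu>"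
      using switch_nonuniform[OF \<mu>] by simp_all
    show "switch \<mu> \<noteq> \<mu>"
      using switch_nonuniform(3)[OF \<mu>] matching_sign_cases[of \<mu>] by auto
  qed
  ultimately show ?thesis
    by simp
qed

end

theorem mainTheorem2:
  fixes U V :: "'v set" and E :: "'v \<Rightarrow> 'v \<Rightarrow> bool"
    and m n :: nat and \<eta> \<eta>' :: "'v hvert \<Rightarrow> nat"
  assumes "cubic_bipartite U V E"
    and "m = card U" and "m = card V" and "n = 10 * m"
    and "bij_betw \<eta> (Xset U V E) {0..<n}"
    and "bij_betw \<eta>' (Yset U V E) {0..<n}"
  shows "det (biadj_matrix U V E n \<eta> \<eta>') =
     int (card {\<mu> \<in> uniform_matchings U V E. matching_sign U V E n \<eta> \<eta>' \<mu> = 1})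
   - int (card {\<mu> \<in> uniform_matchings U V E. matching_sign U V E n \<eta> \<eta>' \<mu> = -1})"
proof -
  interpret gadget_graph U V E n \<eta> \<eta>'
    using assms(1,5,6) by unfold_locales
  have "finite UM"
    using finite_PM by (rule finite_subset[rotated]) (auto simp: uniform_matchings_def)
  then have "(\<Sum>\<mu>\<in>UM. msign \<mu>) = int (card {\<mu> \<in> UM. msign \<mu> = 1}) - int (card {\<mu> \<in> UM. msign \<mu> = -1})"
    by (rule sum_plus_minus_one) (simp add: matching_sign_cases)
  then show ?thesis
    using det_biadj_matrix sum_perfect_matchings_eq_sum_uniform by simp
qed

end
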